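(* Let $l\ge1$ and $n\ge4l+2$. No equilateral $(2l+1)$-pointed star inscribed in $P_n$ has both a point that is a vertex of $P_n$ and a point that is the midpoint of an edge of $P_n$. Equivalently, no point of $P_n$ is both a vertex crossing and a midpoint crossing.
   Context: $P_n$ is the boundary of the regular polygon in $\mathbb{R}^2$ with vertices the $n$-th roots of unity, Euclidean metric $\|x-y\|$. $d_{P_n}(x,y)\in[0,1)$ is the counterclockwise arc length of $P_n$ from $x$ to $y$ divided by the perimeter. The directed Vietoris–Rips graph $\mathrm{VR}_<(P_n;r)$ has vertex set $P_n$ and, for distinct $u,w$ with $\|u-w\|<r$, the edge $u\to w$ if $d_{P_n}(u,w)<d_{P_n}(w,u)$, else $w\to u$; it is cyclic if whenever $u_0\to u_1$, every $w$ strictly counterclockwise-between them has $u_0\to w$ and $w\to u_1$. $r_n=\sup\{r\ge0:\mathrm{VR}_<(P_n;r')\text{ cyclic for all }0<r'<r\}$. For $0<r<r_n$, $g_r(p)$ is the first point $w$ met moving counterclockwise from $p$ with $\|p-w\|=r$, and $g_{r_n}=\lim_{r\to r_n}g_r$. An equilateral $(2l+1)$-pointed star of side $r\in(0,r_n]$ inscribed in $P_n$ is a cyclic sequence $u_0,\dots,u_{2l}$ with $u_{i+1}=g_r(u_i)$ (indices mod $2l+1$) and $\sum_{i}d_{P_n}(u_i,u_{i+1})=l$. For $n\ge4l+2$ each $p\in P_n$ lies on exactly one such star; $p$ is a vertex crossing (resp. midpoint crossing) if that star contains a vertex of $P_n$ (resp. a midpoint of an edge of $P_n$). *)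

theory Defs
  imports Complex_Main
begin

definition pvert :: "nat \<Rightarrow> int \<Rightarrow> complex" where
  "pvert n k = cis (2 * pi * real_of_int k / real n)"

text \<open>Normalized arc-length (counterclockwise) parametrization of the boundary P_n,
  1-periodic in t; since all edges have equal length, arc length / perimeter is
  proportional to the parameter on each edge.\<close>
definition pparam :: "nat \<Rightarrow> real \<Rightarrow> complex" where
  "pparam n t = (let s = frac t * real n; k = floor s; a = s - real_of_int k
                 in complex_of_real (1 - a) * pvert n k + complex_of_real a * pvert n (k + 1))"

definition polygon :: "nat \<Rightarrow> complex set" where
  "polygon n = pparam n ` {0..<1}"

definition ppos :: "nat \<Rightarrow> complex \<Rightarrow> real" where
  "ppos n x = (THE t. 0 \<le> t \<and> t < 1 \<and> pparam n t = x)"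

text \<open>d_{P_n}(x,y): counterclockwise arc length from x to y divided by the perimeter.\<close>
definition dP :: "nat \<Rightarrow> complex \<Rightarrow> complex \<Rightarrow> real" where
  "dP n x y = frac (ppos n y - ppos n x)"

definition vr_edge :: "nat \<Rightarrow> real \<Rightarrow> complex \<Rightarrow> complex \<Rightarrow> bool" where
  "vr_edge n r u w \<longleftrightarrow> u \<in> polygon n \<and> w \<in> polygon n \<and> u \<noteq> w \<and>
      norm (u - w) < r \<and> dP n u w \<le> dP n w u"

definition vr_cyclic :: "nat \<Rightarrow> real \<Rightarrow> bool" where
  "vr_cyclic n r \<longleftrightarrow> (\<forall>u0 u1 w. vr_edge n r u0 u1 \<longrightarrow> w \<in> polygon n \<longrightarrow>
      0 < dP n u0 w \<longrightarrow> dP n u0 w < dP n u0 u1 \<longrightarrow>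
      vr_edge n r u0 w \<and> vr_edge n r w u1)"

definition r_crit :: "nat \<Rightarrow> real" where
  "r_crit n = Sup {r. 0 \<le> r \<and> (\<forall>r'. 0 < r' \<and> r' < r \<longrightarrow> vr_cyclic n r')}"

definition g_map :: "nat \<Rightarrow> real \<Rightarrow> complex \<Rightarrow> complex" where
  "g_map n r p = pparam n (ppos n p +
      Inf {t. 0 < t \<and> t < 1 \<and> norm (p - pparam n (ppos n p + t)) = r})"

definition g_full :: "nat \<Rightarrow> real \<Rightarrow> complex \<Rightarrow> complex" where
  "g_full n r p = (if r < r_crit n then g_map n r p
                   else Lim (at_left (r_crit n)) (\<lambda>s. g_map n s p))"

definition is_star :: "nat \<Rightarrow> nat \<Rightarrow> real \<Rightarrow> (nat \<Rightarrow> complex) \<Rightarrow> bool" where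
  "is_star n l r u \<longleftrightarrow> 0 < r \<and> r \<le> r_crit n \<and>
      (\<forall>i < 2*l+1. u i \<in> polygon n \<and> u ((i + 1) mod (2*l+1)) = g_full n r (u i)) \<and>
      (\<Sum>i < 2*l+1. dP n (u i) (u ((i + 1) mod (2*l+1)))) = real l"

definition is_vertex :: "nat \<Rightarrow> complex \<Rightarrow> bool" where
  "is_vertex n x \<longleftrightarrow> (\<exists>k. x = pvert n k)"

definition is_edge_midpoint :: "nat \<Rightarrow> complex \<Rightarrow> bool" where
  "is_edge_midpoint n x \<longleftrightarrow> (\<exists>k. x = (pvert n k + pvert n (k + 1)) / 2)"

end

theory Submission
  imports Defs "HOL-Analysis.Analysis"
begin

(* In arc-length coordinates, cyclicity of VR_<(P_n; r) for r < r_n makes chords monotone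
   along short arcs, so the first point g_r(x) at distance r from x is reached by a clean
   crossing.  Hence the reflections of P_n through vertices and edge midpoints, which act as
   x |-> c - x with n c in Z, conjugate g_r to its inverse.  A star is a periodic orbit of g_r
   of odd length 2l+1.  A vertex u_i on it makes the orbit symmetric about u_i, an edge midpoint
   u_j makes it symmetric about u_j; the two reflections compose to a rotation carrying u_k to
   u_(k+2(j-i)), and l+1 steps of it lead from u_i to u_(j+(2l+1)(j-i)) = u_j.  The rotation
   preserves n x modulo Z, but n x is an integer at a vertex and a half-integer at an edge
   midpoint. *)

section \<open>Parametrization of the polygon\<close>

definition pgon_path :: "nat \<Rightarrow> real \<Rightarrow> complex" where
  "pgon_path n s = complex_of_real (1 - frac s) * pvert n \<lfloor>s\<rfloor>
                   + complex_of_real (frac s) * pvert n (\<lfloor>s\<rfloor> + 1)"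

lemma pvert_add: "pvert n (k + m) = cis (2 * pi * of_int m / real n) * pvert n k"
  unfolding pvert_def cis_mult by (simp add: add_divide_distrib algebra_simps)

lemma pvert_uminus: "pvert n (- k) = cnj (pvert n k)"
  unfolding pvert_def cis_cnj by simp

lemma pvert_of_nat_self: "n > 0 \<Longrightarrow> pvert n (int n) = 1"
  unfolding pvert_def by simp

lemma pgon_path_of_int [simp]: "pgon_path n (of_int k) = pvert n k"
  unfolding pgon_path_def by simp

lemma pgon_path_edge:
  assumes "0 \<le> a" "a \<le> 1"
  shows "pgon_path n (of_int k + a) =
    complex_of_real (1 - a) * pvert n k + complex_of_real a * pvert n (k + 1)"
proof (cases "a = 1")
  case True
  then show ?thesis using pgon_path_of_int[of n "k + 1"] by simp
next
  case False
  with assms have "\<lfloor>of_int k + a\<rfloor> = k" "frac (of_int k + a) = a"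
    by (linarith, simp add: frac_eq)
  then show ?thesis unfolding pgon_path_def by simp
qed

lemma pgon_path_add_of_int:
  "pgon_path n (s + of_int m) = cis (2 * pi * of_int m / real n) * pgon_path n s"
  using pvert_add[of n "\<lfloor>s\<rfloor>" m] pvert_add[of n "\<lfloor>s\<rfloor> + 1" m]
  unfolding pgon_path_def by (simp add: algebra_simps)

lemma pgon_path_periodic:
  assumes "n > 0" shows "pgon_path n (s + of_int (int n * m)) = pgon_path n s"
proof -
  have "2 * pi * of_int (int n * m) / real n = 2 * pi * of_int m" using assms by simp
  then show ?thesis
    unfolding pgon_path_add_of_int by (simp add: cis_multiple_2pi[of "of_int m", simplified])
qed

lemma pgon_path_uminus: "pgon_path n (- s) = cnj (pgon_path n s)"
proof (cases "s \<in> \<int>")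
  case True
  then obtain k where "s = of_int k" by (auto elim: Ints_cases)
  then show ?thesis using pgon_path_of_int[of n "- k"] by (simp add: pvert_uminus)
next
  case False
  define k a where "k = \<lfloor>s\<rfloor>" and "a = frac s"
  have a: "0 < a" "a < 1" using False unfolding a_def by (auto simp: frac_lt_1)
  have s: "s = of_int k + a" and ms: "- s = of_int (- k - 1) + (1 - a)"
    unfolding k_def a_def frac_def by simp_all
  have "pgon_path n (- s) =
      complex_of_real a * pvert n (- k - 1) + complex_of_real (1 - a) * pvert n (- k)"
    unfolding ms using pgon_path_edge[of "1 - a" n "- k - 1"] a by simp
  also have "\<dots> = cnj (complex_of_real (1 - a) * pvert n k + complex_of_real a * pvert n (k + 1))"
    by (simp flip: pvert_uminus)
  also have "\<dots> = cnj (pgon_path n s)"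
    unfolding s using pgon_path_edge[of a n k] a by simp
  finally show ?thesis .
qed

lemma pparam_eq_pgon_path:
  assumes "n > 0" shows "pparam n t = pgon_path n (real n * t)"
proof -
  have "frac t * real n = real n * t + of_int (int n * (- \<lfloor>t\<rfloor>))"
    by (simp add: frac_def algebra_simps)
  then have "pgon_path n (frac t * real n) = pgon_path n (real n * t)"
    using pgon_path_periodic[OF assms, of "real n * t" "- \<lfloor>t\<rfloor>"] by (simp only:)
  moreover have "pparam n t = pgon_path n (frac t * real n)"
    unfolding pparam_def pgon_path_def Let_def frac_def[of "frac t * real n"] by simp
  ultimately show ?thesis by simp
qed

lemma continuous_on_pgon_path_edge: "continuous_on {of_int k .. of_int k + 1} (pgon_path n)"
proof (rule continuous_on_eq)
  let ?edge = "\<lambda>s. complex_of_real (1 - (s - of_int k)) * pvert n k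
    + complex_of_real (s - of_int k) * pvert n (k + 1)"
  show "continuous_on {of_int k .. of_int k + 1} ?edge"
    by (intro continuous_intros)
  fix s assume "s \<in> {of_int k .. of_int k + (1::real)}"
  then show "?edge s = pgon_path n s"
    using pgon_path_edge[of "s - of_int k" n k] by simp
qed

lemma isCont_pgon_path: "isCont (pgon_path n) s"
proof -
  define k where "k = \<lfloor>s\<rfloor>"
  let ?I = "{of_int (k - 1) .. of_int (k - 1) + 1} \<union> {of_int k .. of_int k + (1::real)}"
  have "continuous_on ?I (pgon_path n)"
    by (intro continuous_on_closed_Un continuous_on_pgon_path_edge) auto
  moreover have "?I = {of_int k - 1 .. of_int k + 1}"
    by auto
  ultimately have "continuous_on {of_int k - 1 <..< of_int k + (1::real)} (pgon_path n)"
    by (elim continuous_on_subset) auto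
  moreover have "s \<in> {of_int k - 1 <..< of_int k + (1::real)}"
    unfolding k_def by simp linarith
  ultimately show ?thesis by (simp add: continuous_on_eq_continuous_at)
qed

lemma isCont_pparam:
  assumes "n > 0" shows "isCont (pparam n) t"
proof -
  have "isCont (\<lambda>t. pgon_path n (real n * t)) t"
    by (rule isCont_o2[OF _ isCont_pgon_path]) (intro continuous_intros)
  then show ?thesis using pparam_eq_pgon_path[OF assms] by presburger
qed

lemma continuous_on_pparam: "n > 0 \<Longrightarrow> continuous_on S (pparam n)"
  using isCont_pparam by (simp add: continuous_at_imp_continuous_on)

lemma pparam_add_of_int: "n > 0 \<Longrightarrow> pparam n (t + of_int m) = pparam n t"
  using pgon_path_periodic[of n "real n * t" m] by (simp add: pparam_eq_pgon_path algebra_simps)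

lemma pparam_frac: "n > 0 \<Longrightarrow> pparam n (frac t) = pparam n t"
  using pparam_add_of_int[of n "frac t" "\<lfloor>t\<rfloor>"] by (simp add: frac_def)

lemma pvert_eq_pparam: "n > 0 \<Longrightarrow> pvert n k = pparam n (of_int k / real n)"
  by (simp add: pparam_eq_pgon_path)

lemma edge_midpoint_eq_pparam:
  assumes "n > 0" shows "(pvert n k + pvert n (k + 1)) / 2 = pparam n ((of_int k + 1/2) / real n)"
proof -
  have "real n * ((of_int k + 1/2) / real n) = of_int k + 1/2" using assms by simp
  then have "pparam n ((of_int k + 1/2) / real n) = pgon_path n (of_int k + 1/2)"
    by (simp only: pparam_eq_pgon_path[OF assms])
  then show ?thesis using pgon_path_edge[of "1/2" n k] by (simp add: field_simps)
qed

text \<open>The component along the outer normal of the edge from \<^term>\<open>pvert n 0\<close> to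
  \<^term>\<open>pvert n 1\<close>; it is maximal on that edge only, which gives injectivity of the
  parametrization.\<close>
definition normal_comp :: "nat \<Rightarrow> complex \<Rightarrow> real" where
  "normal_comp n z = Re (cnj (cis (pi / real n)) * z)"

lemma normal_comp_pvert: "normal_comp n (pvert n i) = cos (pi * of_int (2 * i - 1) / real n)"
proof -
  have "2 * pi * of_int i / real n - pi / real n = pi * of_int (2 * i - 1) / real n"
    by (simp add: algebra_simps diff_divide_distrib)
  then show ?thesis unfolding normal_comp_def pvert_def cis_cnj cis_mult by (simp add: algebra_simps)
qed

lemma normal_comp_combination:
  "normal_comp n (complex_of_real a * z + complex_of_real b * w) =
    a * normal_comp n z + b * normal_comp n w"
  unfolding normal_comp_def by (simp add: algebra_simps)

lemma normal_comp_diff: "normal_comp n (z - w) = normal_comp n z - normal_comp n w"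
  unfolding normal_comp_def by (simp add: algebra_simps)

lemma normal_comp_le_norm: "normal_comp n z \<le> cmod z"
proof -
  have "normal_comp n z \<le> cmod (cnj (cis (pi / real n)) * z)"
    unfolding normal_comp_def by (rule complex_Re_le_cmod)
  then show ?thesis by (simp add: norm_mult)
qed

lemma normal_comp_pvert_lt:
  assumes "3 \<le> n" "2 \<le> i" "i \<le> int n - 1"
  shows "normal_comp n (pvert n i) < cos (pi / real n)"
proof -
  define th where "th = pi * of_int (2 * i - 1) / real n"
  have "pi * 1 < pi * of_int (2 * i - 1)" "pi * of_int (2 * i - 1) < pi * (2 * real n - 1)"
    using assms by (intro mult_strict_left_mono; simp)+
  then have th: "pi / real n < th" "th < 2 * pi - pi / real n"
    using assms unfolding th_def by (simp_all add: divide_strict_right_mono field_simps)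
  have "cos th < cos (pi / real n)"
  proof (cases "th \<le> pi")
    case True
    then show ?thesis using cos_monotone_0_pi[of "pi / real n" th] th by simp
  next
    case False
    then have "cos (2 * pi - th) < cos (pi / real n)"
      using cos_monotone_0_pi[of "pi / real n" "2 * pi - th"] th by simp
    then show ?thesis by simp
  qed
  then show ?thesis unfolding normal_comp_pvert th_def .
qed

lemma normal_comp_pvert_le:
  assumes "3 \<le> n" "0 \<le> i" "i \<le> int n"
  shows "normal_comp n (pvert n i) \<le> cos (pi / real n)"
proof -
  consider "i = 0 \<or> i = 1" | "i = int n" | "2 \<le> i \<and> i \<le> int n - 1" using assms by linarith
  then show ?thesis
  proof cases
    case 1 then show ?thesis by (auto simp: normal_comp_pvert)
  next
    case 2 then show ?thesis using assms pvert_of_nat_self[of n] normal_comp_pvert[of n 0]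
      by (simp add: pvert_def)
  next
    case 3 then show ?thesis using normal_comp_pvert_lt assms by (simp add: less_imp_le)
  qed
qed

lemma pgon_path_first_edge:
  assumes "0 \<le> a" "a \<le> 1"
  shows "pgon_path n a = pvert n 0 + complex_of_real a * (pvert n 1 - pvert n 0)"
  using pgon_path_edge[of a n 0] assms by (simp add: algebra_simps)

lemma normal_comp_first_edge:
  assumes "0 \<le> a" "a \<le> 1" shows "normal_comp n (pgon_path n a) = cos (pi / real n)"
proof -
  have "pgon_path n a = complex_of_real (1 - a) * pvert n 0 + complex_of_real a * pvert n (0 + 1)"
    using pgon_path_edge[of a n 0] assms by simp
  then show ?thesis by (simp only: normal_comp_combination normal_comp_pvert) (simp add: algebra_simps)
qed

lemma normal_comp_off_first_edge:
  assumes n: "3 \<le> n" and s: "1 < s" "s < real n"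
  shows "normal_comp n (pgon_path n s) < cos (pi / real n)"
proof -
  define c i b where "c = cos (pi / real n)" and "i = \<lfloor>s\<rfloor>" and "b = frac s"
  have b: "0 \<le> b" "b < 1" unfolding b_def by (auto simp: frac_lt_1)
  have i: "1 \<le> i" "i \<le> int n - 1" unfolding i_def using s by linarith+
  have "pgon_path n s = complex_of_real (1 - b) * pvert n i + complex_of_real b * pvert n (i + 1)"
    using pgon_path_edge[of b n i] b unfolding i_def b_def frac_def by simp
  then have comp: "normal_comp n (pgon_path n s) =
      (1 - b) * normal_comp n (pvert n i) + b * normal_comp n (pvert n (i + 1))"
    by (simp only: normal_comp_combination)
  have le: "normal_comp n (pvert n i) \<le> c" "normal_comp n (pvert n (i + 1)) \<le> c"
    using normal_comp_pvert_le[OF n] i unfolding c_def by simp_all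
  show ?thesis
  proof (cases "i = 1")
    case True
    then have "0 < b" using s unfolding i_def b_def frac_def by linarith
    moreover have "normal_comp n (pvert n (i + 1)) < c"
      using normal_comp_pvert_lt[OF n, of 2] n True unfolding c_def by simp
    ultimately have "b * normal_comp n (pvert n (i + 1)) < b * c" by simp
    moreover have "(1 - b) * normal_comp n (pvert n i) \<le> (1 - b) * c" using le b by simp
    ultimately show ?thesis unfolding comp c_def by argo
  next
    case False
    then have "normal_comp n (pvert n i) < c" using normal_comp_pvert_lt[OF n] i unfolding c_def by simp
    then have "(1 - b) * normal_comp n (pvert n i) < (1 - b) * c" using b by simp
    moreover have "b * normal_comp n (pvert n (i + 1)) \<le> b * c"
      using le b by (simp add: mult_left_mono)
    ultimately show ?thesis unfolding comp c_def by argo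
  qed
qed

lemma pvert_1_neq_0:
  assumes "2 \<le> n" shows "pvert n 1 \<noteq> pvert n 0"
proof
  assume "pvert n 1 = pvert n 0"
  then have "Re (cis (2 * pi / real n)) = Re (cis 0)" unfolding pvert_def by simp
  then have "cos (2 * pi / real n) = cos 0" by simp
  moreover have "2 * pi / real n \<le> pi" using assms by (simp add: field_simps)
  ultimately show False using cos_monotone_0_pi[of 0 "2 * pi / real n"] assms by simp
qed

lemma pgon_path_inj_first_edge:
  assumes n: "3 \<le> n" and s: "0 \<le> s" "s < 1" and s': "0 \<le> s'" "s' < real n"
    and eq: "pgon_path n s = pgon_path n s'"
  shows "s = s'"
proof -
  have "\<not> 1 < s'"
    using normal_comp_off_first_edge[OF n _ s'(2)] normal_comp_first_edge[of s n] s eq by auto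
  then have "complex_of_real (s - s') * (pvert n 1 - pvert n 0) = 0"
    using eq pgon_path_first_edge[of s n] pgon_path_first_edge[of s' n] s s'
    by (simp add: algebra_simps)
  then show ?thesis using pvert_1_neq_0[of n] n by simp
qed

lemma pgon_path_inj:
  assumes n: "3 \<le> n" and s: "0 \<le> s" "s < real n" and s': "0 \<le> s'" "s' < real n"
    and eq: "pgon_path n s = pgon_path n s'"
  shows "s = s'"
proof -
  define k where "k = \<lfloor>s\<rfloor>"
  have k: "0 \<le> k" "k \<le> int n - 1" "0 \<le> s - of_int k" "s - of_int k < 1"
    unfolding k_def using s by linarith+
  have eq': "pgon_path n (s - of_int k) = pgon_path n (s' - of_int k)"
    using pgon_path_add_of_int[of n s "- k"] pgon_path_add_of_int[of n s' "- k"] eq by simp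
  show ?thesis
  proof (cases "0 \<le> s' - of_int k")
    case True
    then show ?thesis using pgon_path_inj_first_edge[OF n k(3,4) True] eq' s' k by simp
  next
    case False
    have "pgon_path n (s' - of_int k + of_int (int n * 1)) = pgon_path n (s' - of_int k)"
      using n by (intro pgon_path_periodic) auto
    then have "s - of_int k = s' - of_int k + real n"
      using pgon_path_inj_first_edge[OF n k(3,4), of "s' - of_int k + real n"] False s' k eq' by simp
    then show ?thesis using False s' k by simp
  qed
qed

lemma pparam_inj:
  assumes n: "3 \<le> n" and "0 \<le> s" "s < 1" "0 \<le> t" "t < 1" "pparam n s = pparam n t"
  shows "s = t"
proof -
  have "real n * s = real n * t"
    using pgon_path_inj[OF n, of "real n * s" "real n * t"] assms by (simp add: pparam_eq_pgon_path)
  then show ?thesis using n by simp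
qed

lemma ppos_pparam: assumes n: "3 \<le> n" shows "ppos n (pparam n t) = frac t"
  unfolding ppos_def
proof (rule the_equality)
  show "0 \<le> frac t \<and> frac t < 1 \<and> pparam n (frac t) = pparam n t"
    using n by (simp add: frac_lt_1 pparam_frac)
  fix u assume "0 \<le> u \<and> u < 1 \<and> pparam n u = pparam n t"
  then show "u = frac t" using pparam_inj[OF n, of u "frac t"] n by (simp add: frac_lt_1 pparam_frac)
qed

lemma pparam_in_polygon: assumes "n > 0" shows "pparam n t \<in> polygon n"
  unfolding polygon_def using pparam_frac[OF assms, of t] frac_lt_1[of t] frac_ge_0[of t]
  by (metis atLeastLessThan_iff image_eqI)

lemma pparam_ppos:
  assumes n: "3 \<le> n" and p: "p \<in> polygon n"
  shows "pparam n (ppos n p) = p" "0 \<le> ppos n p" "ppos n p < 1"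
proof -
  obtain t where t: "0 \<le> t" "t < 1" "p = pparam n t" using p unfolding polygon_def by auto
  then have "ppos n p = t" using ppos_pparam[OF n, of t] by (simp add: frac_eq)
  then show "pparam n (ppos n p) = p" "0 \<le> ppos n p" "ppos n p < 1" using t by auto
qed

lemma dP_pparam:
  assumes "3 \<le> n" shows "dP n (pparam n x) (pparam n y) = frac (y - x)"
proof -
  have "frac (frac y - frac x) = frac (y - x)"
    using frac_diff_simp[of "frac y" x] frac_add_simps(1)[of y "- x"] by simp
  then show ?thesis by (simp add: dP_def ppos_pparam[OF assms])
qed

lemma pparam_add_neq:
  assumes n: "3 \<le> n" and t: "0 < t" "t < 1" shows "pparam n x \<noteq> pparam n (x + t)"
proof
  assume "pparam n x = pparam n (x + t)"
  then have "frac x = frac (x + t)" using pparam_inj[OF n] n by (simp add: frac_lt_1 pparam_frac)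
  then have "frac t = 0" using frac_diff_eq[of "x + t" x] by simp
  then show False using t frac_eq[of t] by simp
qed

section \<open>Chords and cyclicity\<close>

definition chord :: "nat \<Rightarrow> real \<Rightarrow> real \<Rightarrow> real" where
  "chord n x y = cmod (pparam n x - pparam n y)"

lemma chord_commute: "chord n x y = chord n y x"
  unfolding chord_def by (simp add: norm_minus_commute)

lemma chord_self [simp]: "chord n x x = 0"
  unfolding chord_def by simp

lemma chord_nonneg [simp]: "0 \<le> chord n x y"
  unfolding chord_def by simp

lemma chord_add_of_int_right: "n > 0 \<Longrightarrow> chord n x (y + of_int m) = chord n x y"
  unfolding chord_def by (simp add: pparam_add_of_int)

lemma pparam_reflect:
  assumes n: "n > 0" and c: "real n * c = of_int m"
  shows "pparam n (c - t) = cis (2 * pi * of_int m / real n) * cnj (pparam n t)"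
proof -
  have e: "real n * (c - t) = - (real n * t) + of_int m" using c by (simp add: algebra_simps)
  show ?thesis unfolding pparam_eq_pgon_path[OF n] e pgon_path_add_of_int pgon_path_uminus by simp
qed

lemma chord_reflect:
  assumes n: "n > 0" and c: "real n * c \<in> \<int>"
  shows "chord n (c - x) (c - y) = chord n x y"
proof -
  obtain m where m: "real n * c = of_int m" using c by (auto elim: Ints_cases)
  have "pparam n (c - x) - pparam n (c - y) =
      cis (2 * pi * of_int m / real n) * cnj (pparam n x - pparam n y)"
    unfolding pparam_reflect[OF n m] by (simp add: algebra_simps)
  then show ?thesis unfolding chord_def
    by (simp add: norm_mult complex_cnj_diff[symmetric] del: complex_cnj_diff)
qed

lemma continuous_on_chord:
  assumes n: "n > 0" and "continuous_on S f" "continuous_on S g"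
  shows "continuous_on S (\<lambda>t. chord n (f t) (g t))"
proof -
  have "continuous_on S (\<lambda>t. pparam n (f t))" "continuous_on S (\<lambda>t. pparam n (g t))"
    using continuous_on_compose[OF assms(2) continuous_on_pparam[OF n]]
      continuous_on_compose[OF assms(3) continuous_on_pparam[OF n]] by (simp_all add: o_def)
  then show ?thesis unfolding chord_def by (intro continuous_intros)
qed

lemma vr_cyclic_below_r_crit:
  assumes "0 < r" "r < r_crit n" shows "vr_cyclic n r"
proof -
  let ?S = "{r. 0 \<le> r \<and> (\<forall>r'. 0 < r' \<and> r' < r \<longrightarrow> vr_cyclic n r')}"
  have "0 \<in> ?S" by auto
  then obtain s where "s \<in> ?S" "r < s"
    using less_cSupD[of ?S r] assms(2) unfolding r_crit_def by blast
  then show ?thesis using assms(1) by blast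
qed

lemma vr_edge_pparam:
  assumes n: "3 \<le> n" and t: "0 < t" "t \<le> 1/2" and d: "chord n x (x + t) < r"
  shows "vr_edge n r (pparam n x) (pparam n (x + t))"
proof -
  have "dP n (pparam n x) (pparam n (x + t)) = t" "dP n (pparam n (x + t)) (pparam n x) = 1 - t"
    using t frac_gt_0_iff[of t] by (simp_all add: dP_pparam[OF n] frac_eq frac_neg)
  then show ?thesis
    unfolding vr_edge_def using pparam_in_polygon pparam_add_neq[OF n, of t x] n t d
    by (auto simp: chord_def)
qed

lemma vr_cyclic_chord_less:
  assumes n: "3 \<le> n" and cyc: "vr_cyclic n r" and s: "0 < s" "s < t" and t: "t \<le> 1/2"
    and d: "chord n x (x + t) < r"
  shows "chord n x (x + s) < r \<and> chord n (x + s) (x + t) < r"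
proof -
  have "dP n (pparam n x) (pparam n (x + t)) = t" "dP n (pparam n x) (pparam n (x + s)) = s"
    using s t by (simp_all add: dP_pparam[OF n] frac_eq)
  then have "vr_edge n r (pparam n x) (pparam n (x + s)) \<and>
      vr_edge n r (pparam n (x + s)) (pparam n (x + t))"
    using cyc[unfolded vr_cyclic_def, rule_format, OF vr_edge_pparam[OF n _ t d]] s n
    by (simp add: pparam_in_polygon)
  then show ?thesis unfolding vr_edge_def chord_def by simp
qed

text \<open>Letting the radius decrease to the chord turns the strict bounds of cyclicity into
  non-strict ones at the chord itself.\<close>
lemma chord_between_le:
  assumes n: "3 \<le> n" and d: "chord n x (x + t) < r_crit n"
    and s: "0 < s" "s < t" and t: "t \<le> 1/2"
  shows "chord n x (x + s) \<le> chord n x (x + t) \<and>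
    chord n (x + s) (x + t) \<le> chord n x (x + t)"
proof -
  have *: "chord n x (x + s) < r \<and> chord n (x + s) (x + t) < r"
    if "chord n x (x + t) < r" "r < r_crit n" for r
  proof -
    have "0 < r" using that(1) chord_nonneg[of n x "x + t"] by linarith
    then show ?thesis
      using vr_cyclic_chord_less[OF n vr_cyclic_below_r_crit[OF _ that(2)] s t that(1)] by blast
  qed
  show ?thesis
    using dense_ge_bounded[OF d, of "chord n x (x + s)"]
      dense_ge_bounded[OF d, of "chord n (x + s) (x + t)"] *
    by (meson less_imp_le)
qed

lemma chord_le_antipodal:
  assumes n: "3 \<le> n" and d: "chord n x (x + 1/2) < r_crit n"
  shows "chord n x z \<le> chord n x (x + 1/2)"
proof -
  have n0: "n > 0" using n by simp
  define s where "s = frac (z - x)"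
  have s: "0 \<le> s" "s < 1" unfolding s_def by (auto simp: frac_lt_1)
  have "z = (x + s) + of_int \<lfloor>z - x\<rfloor>" unfolding s_def frac_def by simp
  then have z: "chord n x z = chord n x (x + s)" using chord_add_of_int_right[OF n0] by metis
  have antipode: "chord n (x + 1/2) (x + 1/2 + 1/2) = chord n x (x + 1/2)"
    using chord_add_of_int_right[OF n0, of "x + 1/2" x 1] by (simp add: chord_commute add.assoc)
  consider "s = 0" | "0 < s \<and> s < 1/2" | "s = 1/2" | "1/2 < s" using s by linarith
  then show ?thesis
  proof cases
    case 2 then show ?thesis unfolding z using chord_between_le[OF n d, of s] by simp
  next
    case 3 then show ?thesis unfolding z 3 by simp
  next
    case 4
    have "chord n (x + 1/2 + (s - 1/2)) (x + 1/2 + 1/2) \<le> chord n (x + 1/2) (x + 1/2 + 1/2)"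
      using chord_between_le[OF n _ _ _ order_refl, of "x + 1/2" "s - 1/2"] antipode d 4 s by simp
    moreover have "chord n (x + 1/2 + (s - 1/2)) (x + 1/2 + 1/2) = chord n x (x + s)"
      using chord_add_of_int_right[OF n0, of "x + s" x 1] by (simp add: chord_commute add.assoc)
    ultimately show ?thesis unfolding z using antipode by simp
  qed (simp_all add: z)
qed

section \<open>The critical radius and the width of the polygon\<close>

text \<open>The width of the regular n-gon: the distance between two parallel edges for even n,
  and between a vertex and the opposite edge for odd n.\<close>
definition pgon_width :: "nat \<Rightarrow> real" where
  "pgon_width n = (if even n then 2 * cos (pi / real n) else 1 + cos (pi / real n))"

lemma cos_pi_div_bounds:
  assumes "3 \<le> n" shows "0 < cos (pi / real n)" "cos (pi / real n) < 1"
proof -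
  have le: "pi / real n \<le> pi / 3" using assms by (intro divide_left_mono) auto
  also have "\<dots> < pi / 2" by simp
  finally have "pi / real n < pi / 2" .
  moreover have "0 < pi / real n" using assms by simp
  ultimately show "0 < cos (pi / real n)" by (intro cos_gt_zero_pi) auto
  have "cos (pi / real n) < cos 0"
    using cos_monotone_0_pi[of 0 "pi / real n"] le \<open>0 < pi / real n\<close> by simp
  then show "cos (pi / real n) < 1" by simp
qed

lemma edge_midpoint_eq:
  "(pvert n k + pvert n (k + 1)) / 2 =
    complex_of_real (cos (pi / real n)) * cis (pi * of_int (2 * k + 1) / real n)"
proof -
  define th ph where "th = pi / real n" and "ph = pi * of_int (2 * k + 1) / real n"
  have "ph - th = 2 * pi * of_int k / real n" "ph + th = 2 * pi * of_int (k + 1) / real n"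
    unfolding th_def ph_def
    by (simp_all add: diff_divide_distrib[symmetric] add_divide_distrib[symmetric] algebra_simps)
  then have "pvert n k = cis (ph - th)" "pvert n (k + 1) = cis (ph + th)"
    unfolding pvert_def by simp_all
  then show ?thesis unfolding th_def[symmetric] ph_def[symmetric]
    by (simp add: complex_eq_iff cos_add cos_diff sin_add sin_diff)
qed

lemma exists_chord_ge_width:
  assumes n: "3 \<le> n" shows "\<exists>z. pgon_width n \<le> chord n x z"
proof -
  have n0: "n > 0" using n by simp
  define k a where "k = \<lfloor>real n * x\<rfloor>" and "a = frac (real n * x)"
  have a: "0 \<le> a" "a \<le> 1" unfolding a_def by (auto simp: frac_lt_1 less_imp_le)
  define i :: int where "i = (if even n then int (n div 2) else int ((n + 1) div 2))"
  define rot where "rot = cis (2 * pi * of_int k / real n)"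
  have "pparam n x = pgon_path n (a + of_int k)"
    unfolding pparam_eq_pgon_path[OF n0] a_def k_def frac_def by simp
  then have px: "pparam n x = rot * pgon_path n a" unfolding rot_def pgon_path_add_of_int .
  have pz: "pparam n (of_int (i + k) / real n) = rot * pvert n i"
    unfolding pvert_eq_pparam[OF n0, symmetric] rot_def by (rule pvert_add)
  have "chord n x (of_int (i + k) / real n) = cmod (pgon_path n a - pvert n i)"
    unfolding chord_def px pz rot_def by (simp add: norm_mult flip: right_diff_distrib)
  moreover have "normal_comp n (pvert n i) = (if even n then - cos (pi / real n) else -1)"
  proof (cases "even n")
    case True
    then have "pi * of_int (2 * i - 1) / real n = pi - pi / real n"
      using n0 unfolding i_def by (auto simp: field_simps elim!: evenE)
    then show ?thesis using True by (simp add: normal_comp_pvert)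
  next
    case False
    then have "pi * of_int (2 * i - 1) / real n = pi"
      using n0 unfolding i_def by (auto simp: field_simps elim!: oddE)
    then show ?thesis using False by (simp add: normal_comp_pvert)
  qed
  then have "pgon_width n = normal_comp n (pgon_path n a - pvert n i)"
    unfolding normal_comp_diff normal_comp_first_edge[OF a] pgon_width_def by simp
  ultimately show ?thesis using normal_comp_le_norm by metis
qed

lemma pparam_edge_midpoint:
  assumes "n > 0"
  shows "pparam n ((of_int k + 1/2) / real n) =
    complex_of_real (cos (pi / real n)) * cis (pi * of_int (2 * k + 1) / real n)"
  using edge_midpoint_eq_pparam[OF assms, of k] edge_midpoint_eq[of n k] by simp

lemma chord_gt_antipodal_even:
  assumes n: "3 \<le> n" and "even n"
  defines "x \<equiv> 1 / (2 * real n)" and "c \<equiv> cos (pi / real n)"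
  shows "chord n x (x + 1/2) = 2 * c" "2 * c < chord n x (1/2)"
proof -
  obtain m where m: "n = 2 * m" using \<open>even n\<close> by blast
  have n0: "n > 0" using n by simp
  define th where "th = pi / real n"
  have c: "0 < c" "c < 1" using cos_pi_div_bounds[OF n] unfolding c_def by auto
  have "x = (of_int 0 + 1/2) / real n" "x + 1/2 = (of_int (int m) + 1/2) / real n"
    unfolding x_def using m n0 by (simp_all add: field_simps)
  moreover have "pi * of_int (2 * 0 + 1) / real n = th" "pi * of_int (2 * int m + 1) / real n = pi + th"
    unfolding th_def using m n0 by (simp_all add: field_simps)
  ultimately have px: "pparam n x = complex_of_real c * cis th"
    and "pparam n (x + 1/2) = complex_of_real c * cis (pi + th)"
    using pparam_edge_midpoint[OF n0, of 0] pparam_edge_midpoint[OF n0, of "int m"]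
    unfolding c_def by simp_all
  then have "pparam n (x + 1/2) = - complex_of_real c * cis th" by (simp flip: cis_mult)
  with px show "chord n x (x + 1/2) = 2 * c" unfolding chord_def using c by (simp add: norm_mult)
  have "pparam n (1/2) = -1"
    using pvert_eq_pparam[OF n0, of "int m"] m n0 by (simp add: pvert_def)
  then have "(chord n x (1/2))\<^sup>2 =
      1 + 2 * c * cos th + c\<^sup>2 * (cos th * cos th + sin th * sin th)"
    unfolding chord_def px cmod_power2
    by (simp add: power2_eq_square algebra_simps del: sin_cos_squared_add3)
  also have "\<dots> = 1 + 3 * c\<^sup>2" unfolding th_def c_def by (simp add: power2_eq_square)
  also have "\<dots> > (2 * c)\<^sup>2" using c mult_strict_mono[of c 1 c 1] by (simp add: power2_eq_square)
  finally show "2 * c < chord n x (1/2)" using power_less_imp_less_base chord_nonneg by blast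
qed

lemma chord_gt_antipodal_odd:
  assumes n: "3 \<le> n" and "odd n"
  defines "c \<equiv> cos (pi / real n)"
  shows "chord n 0 (1/2) = 1 + c" "1 + c < chord n 0 (real (n div 2) / real n)"
proof -
  obtain m where m: "n = 2 * m + 1" using \<open>odd n\<close> oddE by blast
  have n0: "n > 0" using n by simp
  define th where "th = pi / real n"
  have c: "0 < c" "c < 1" using cos_pi_div_bounds[OF n] unfolding c_def by auto
  have p0: "pparam n 0 = 1" using pvert_eq_pparam[OF n0, of 0] by (simp add: pvert_def)
  have "pparam n (1/2) = pparam n ((of_int (int m) + 1/2) / real n)"
    by (rule arg_cong[where f = "pparam n"]) (simp add: m field_simps)
  also have "\<dots> = complex_of_real c * cis (pi * of_int (2 * int m + 1) / real n)"
    unfolding c_def by (rule pparam_edge_midpoint[OF n0])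
  also have "pi * of_int (2 * int m + 1) / real n = pi" using m n0 by (simp add: field_simps)
  finally have "pparam n (1/2) = - complex_of_real c" by simp
  moreover have "1 - - complex_of_real c = complex_of_real (1 + c)" by simp
  ultimately show "chord n 0 (1/2) = 1 + c" unfolding chord_def p0 using c by (simp only: norm_of_real)
  have "2 * pi * of_int (int m) / real n = pi - th" "real (n div 2) = of_int (int m)"
    unfolding th_def using m n0 by (simp_all add: field_simps)
  then have "pparam n (real (n div 2) / real n) = - cis (- th)"
    using pvert_eq_pparam[OF n0, of "int m"] by (simp add: pvert_def complex_eq_iff)
  then have "(chord n 0 (real (n div 2) / real n))\<^sup>2 = 2 + 2 * c"
    unfolding chord_def p0 cmod_power2 th_def c_def by (simp add: power2_eq_square algebra_simps)
  also have "\<dots> > (1 + c)\<^sup>2"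
    using c mult_strict_mono[of c 1 c 1] by (simp add: power2_eq_square algebra_simps)
  finally show "1 + c < chord n 0 (real (n div 2) / real n)"
    using power_less_imp_less_base chord_nonneg by blast
qed

lemma exists_chord_gt_antipodal:
  assumes n: "3 \<le> n"
  shows "\<exists>x z. chord n x (x + 1/2) = pgon_width n \<and> pgon_width n < chord n x z"
proof (cases "even n")
  case True
  then show ?thesis using chord_gt_antipodal_even[OF n] unfolding pgon_width_def by auto
next
  case False
  then show ?thesis using chord_gt_antipodal_odd[OF n] unfolding pgon_width_def
    by (intro exI[of _ 0] exI[of _ "real (n div 2) / real n"]) auto
qed

lemma r_crit_le_width:
  assumes n: "3 \<le> n" shows "r_crit n \<le> pgon_width n"
proof (rule ccontr)
  assume "\<not> ?thesis"
  obtain x z where "chord n x (x + 1/2) = pgon_width n" "pgon_width n < chord n x z"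
    using exists_chord_gt_antipodal[OF n] by blast
  with \<open>\<not> ?thesis\<close> show False using chord_le_antipodal[OF n, of x z] by linarith
qed

lemma exists_chord_eq:
  assumes n: "3 \<le> n" and r: "0 < r" "r \<le> r_crit n"
  shows "\<exists>t. 0 < t \<and> t \<le> 1/2 \<and> chord n x (x + t) = r"
proof (cases "r \<le> chord n x (x + 1/2)")
  case True
  have "continuous_on {0..1/2} (\<lambda>t. chord n x (x + t))"
    using n by (intro continuous_on_chord continuous_intros) auto
  then obtain t where t: "0 \<le> t" "t \<le> 1/2" "chord n x (x + t) = r"
    using IVT'[of "\<lambda>t. chord n x (x + t)" 0 r "1/2"] True r by auto
  moreover have "t \<noteq> 0" using t r by auto
  ultimately show ?thesis by (intro exI[of _ t]) auto
next
  case False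
  obtain z where "pgon_width n \<le> chord n x z" using exists_chord_ge_width[OF n] by blast
  then show ?thesis
    using False r r_crit_le_width[OF n] chord_le_antipodal[OF n, of x z] by linarith
qed

section \<open>The first-hit map\<close>

lemma norm_eq_midpoint_imp_eq:
  fixes u v :: "'a::real_inner"
  assumes "norm u = rho" "norm v = rho" "norm (u + v) = 2 * rho"
  shows "u = v"
proof (cases "rho = 0")
  case True
  then show ?thesis using assms by simp
next
  case False
  have "norm (u + v) = norm u + norm v" using assms by simp
  then have "rho *\<^sub>R v = rho *\<^sub>R u" unfolding norm_triangle_eq using assms by simp
  then show ?thesis using False by simp
qed

lemma pparam_affine_near:
  assumes n: "n > 0"
  obtains e A B where "0 < e" "e \<le> 1"
    "\<And>y. y0 \<le> y \<Longrightarrow> y \<le> y0 + e \<Longrightarrow> pparam n y = A + complex_of_real y * B"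
proof -
  define k where "k = \<lfloor>real n * y0\<rfloor>"
  define e where "e = (of_int k + 1) / real n - y0"
  define D where "D = pvert n (k + 1) - pvert n k"
  have k: "of_int k \<le> real n * y0" "real n * y0 < of_int k + 1" unfolding k_def by linarith+
  have nr: "1 \<le> real n" using n by simp
  have "0 < e" "real n * e \<le> 1" unfolding e_def using k n by (simp_all add: field_simps)
  moreover have "e \<le> 1"
    using \<open>real n * e \<le> 1\<close> \<open>0 < e\<close> nr mult_right_mono[OF nr, of e] by linarith
  moreover have "pparam n y = (pvert n k - of_int k * D) + complex_of_real y * (of_nat n * D)"
    if "y0 \<le> y" "y \<le> y0 + e" for y
  proof -
    have "real n * y0 \<le> real n * y" "real n * y \<le> real n * (y0 + e)"
      using that by (simp_all add: mult_left_mono)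
    moreover have "real n * (y0 + e) = of_int k + 1" unfolding e_def using n by (simp add: field_simps)
    ultimately have "0 \<le> real n * y - of_int k" "real n * y - of_int k \<le> 1" using k by linarith+
    then show ?thesis unfolding D_def
      using pgon_path_edge[of "real n * y - of_int k" n k]
      by (simp add: pparam_eq_pgon_path[OF n] algebra_simps)
  qed
  ultimately show thesis using that by blast
qed

text \<open>Three equidistant points on one edge cannot lie on a circle.\<close>
lemma pparam_not_on_circle:
  assumes n: "3 \<le> n" and ab: "a < b"
  shows "\<not> (\<forall>y. a < y \<and> y < b \<longrightarrow> cmod (pparam n y - P) = rho)"
proof
  assume on_circle: "\<forall>y. a < y \<and> y < b \<longrightarrow> cmod (pparam n y - P) = rho"
  obtain e A B where e: "0 < e" "e \<le> 1"
    and affine: "\<And>y. a \<le> y \<Longrightarrow> y \<le> a + e \<Longrightarrow> pparam n y = A + complex_of_real y * B"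
    using pparam_affine_near[of n a] n by auto
  define d where "d = min e (b - a) / 4"
  have d: "0 < d" "3 * d < b - a" "3 * d \<le> e" "2 * d < 1"
    using e ab unfolding d_def by (auto simp: min_def)
  define u v where "u = pparam n (a + d) - P" and "v = pparam n (a + d + 2 * d) - P"
  have uv: "u + v = 2 * (pparam n (a + 2 * d) - P)"
    unfolding u_def v_def using affine[of "a + d"] affine[of "a + 2 * d"] affine[of "a + d + 2 * d"] d
    by (simp add: algebra_simps)
  have "cmod u = rho" "cmod v = rho" "cmod (pparam n (a + 2 * d) - P) = rho"
    unfolding u_def v_def using on_circle d by auto
  moreover from this(3) have "cmod (u + v) = 2 * rho" unfolding uv norm_mult by simp
  ultimately have "u = v" using norm_eq_midpoint_imp_eq by blast
  then show False using pparam_add_neq[OF n, of "2 * d" "a + d"] d unfolding u_def v_def by simp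
qed

lemma Inf_first_crossing:
  fixes f :: "real \<Rightarrow> real"
  assumes f: "continuous_on UNIV f" "f 0 = 0" and r: "0 < r" and t0: "0 < t0" "t0 < 1" "f t0 = r"
  defines "F \<equiv> Inf {t. 0 < t \<and> t < 1 \<and> f t = r}"
  shows "0 < F" "F \<le> t0" "f F = r" "\<And>t. 0 < t \<Longrightarrow> t < F \<Longrightarrow> f t < r"
proof -
  let ?S = "{t. 0 < t \<and> t < 1 \<and> f t = r}"
  have ne: "?S \<noteq> {}" and bdd: "bdd_below ?S" using t0 by (auto intro: bdd_belowI[of _ 0])
  show Ft0: "F \<le> t0" unfolding F_def using t0 bdd by (intro cInf_lower) auto
  have "closure ?S \<subseteq> {t. f t = r}"
    by (intro closure_minimal closed_Collect_eq f(1) continuous_on_const) auto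
  then show fF: "f F = r" using closure_contains_Inf[OF ne bdd] unfolding F_def by blast
  have "0 \<le> F" unfolding F_def by (rule cInf_greatest[OF ne]) auto
  then show F0: "0 < F" using fF f(2) r by (cases "F = 0") auto
  fix t assume t: "0 < t" "t < F"
  have not_in_S: "t' \<notin> ?S" if "t' \<le> t" for t'
    using cInf_lower[OF _ bdd, of t'] that t unfolding F_def by force
  have "f t \<noteq> r" using not_in_S[of t] t Ft0 t0 by auto
  moreover have "\<not> r < f t"
  proof
    assume "r < f t"
    then obtain t' where "0 \<le> t'" "t' \<le> t" "f t' = r"
      using IVT'[of f 0 r t] f r t continuous_on_subset[OF f(1)] by fastforce
    then show False using not_in_S[of t'] f(2) r t Ft0 t0 by (cases "t' = 0") auto
  qed
  ultimately show "f t < r" by simp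
qed

definition hit_time :: "nat \<Rightarrow> real \<Rightarrow> real \<Rightarrow> real" where
  "hit_time n r y = Inf {t. 0 < t \<and> t < 1 \<and> norm (pparam n y - pparam n (y + t)) = r}"

lemma hit_time_first_hit:
  assumes n: "3 \<le> n" and r: "0 < r" "r \<le> r_crit n"
  shows "0 < hit_time n r x" "hit_time n r x \<le> 1/2" "chord n x (x + hit_time n r x) = r"
    "\<And>t. 0 < t \<Longrightarrow> t < hit_time n r x \<Longrightarrow> chord n x (x + t) < r"
proof -
  obtain t0 where t0: "0 < t0" "t0 \<le> 1/2" "chord n x (x + t0) = r"
    using exists_chord_eq[OF n r] by blast
  have "continuous_on UNIV (\<lambda>t. chord n x (x + t))"
    using n by (intro continuous_on_chord continuous_intros) auto
  note first = Inf_first_crossing[OF this _ r(1) t0(1) _ t0(3)]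
  have "hit_time n r x = Inf {t. 0 < t \<and> t < 1 \<and> chord n x (x + t) = r}"
    unfolding hit_time_def chord_def ..
  then show "0 < hit_time n r x" "hit_time n r x \<le> 1/2" "chord n x (x + hit_time n r x) = r"
    "\<And>t. 0 < t \<Longrightarrow> t < hit_time n r x \<Longrightarrow> chord n x (x + t) < r"
    using first t0 by auto
qed

text \<open>If the chord from \<^term>\<open>x + s0\<close> to the first hit were equal to \<^term>\<open>r\<close>,
  monotonicity would force the same along the whole arc between \<^term>\<open>x\<close> and
  \<^term>\<open>x + s0\<close>, putting an arc of the polygon on a circle.\<close>
lemma chord_to_hit_time_less:
  assumes n: "3 \<le> n" and r: "0 < r" "r \<le> r_crit n" and s0: "0 < s0" "s0 < hit_time n r x"
  shows "chord n (x + s0) (x + hit_time n r x) < r"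
proof -
  define F where "F = hit_time n r x"
  note F = hit_time_first_hit[OF n r, where x = x, folded F_def]
  have le: "chord n (x + s) (x + F) \<le> r" if s: "0 < s" "s < F" for s
  proof -
    have "chord n (x + s) (x + u) \<le> r" if "u \<in> {s<..<F}" for u
      using chord_between_le[OF n _ s(1), where x = x and t = u] F(2) F(4)[of u] that r s by fastforce
    then have "closure {s<..<F} \<subseteq> {u. chord n (x + s) (x + u) \<le> r}"
      using n by (intro closure_minimal closed_Collect_le continuous_on_chord continuous_intros) auto
    moreover have "F \<in> closure {s<..<F}" using s by simp
    ultimately show ?thesis by blast
  qed
  have s0F: "s0 < F" using s0 unfolding F_def by simp
  show ?thesis unfolding F_def[symmetric]
  proof (rule ccontr)
    assume "\<not> chord n (x + s0) (x + F) < r"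
    then have at_s0: "chord n (x + s0) (x + F) = r" using le[OF s0(1) s0F] by simp
    have on_arc: "chord n (x + s) (x + F) = r" if s: "0 < s" "s < s0" for s
    proof (rule ccontr)
      assume "chord n (x + s) (x + F) \<noteq> r"
      moreover have "chord n (x + s) (x + F) \<le> r" using le[OF s(1)] s(2) s0F by simp
      ultimately have lt: "chord n (x + s) (x + F) < r" by simp
      have e: "x + s + (F - s) = x + F" "x + s + (s0 - s) = x + s0" by simp_all
      have "chord n (x + s0) (x + F) \<le> chord n (x + s) (x + F)"
        using chord_between_le[OF n, where x = "x + s" and t = "F - s" and s = "s0 - s", unfolded e]
          lt r(2) s s0F F(2) by simp
      then show False using at_s0 lt by simp
    qed
    have "cmod (pparam n y - pparam n (x + F)) = r" if "x < y \<and> y < x + s0" for y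
      using on_arc[of "y - x"] that unfolding chord_def by simp
    moreover have "x < x + s0" using s0(1) by simp
    ultimately show False using pparam_not_on_circle[OF n, of x "x + s0" "pparam n (x + F)" r] by blast
  qed
qed

lemma hit_time_strict_mono:
  assumes n: "3 \<le> n" and s: "0 < s" "s < r" and r: "r \<le> r_crit n"
  shows "hit_time n s x < hit_time n r x"
proof -
  define F where "F = hit_time n r x"
  have F: "0 < F" "chord n x (x + F) = r"
    using hit_time_first_hit(1,3)[OF n _ r, where x = x] s unfolding F_def by auto
  have "continuous_on {0..F} (\<lambda>t. chord n x (x + t))"
    using n by (intro continuous_on_chord continuous_intros) auto
  then obtain t where t: "0 \<le> t" "t \<le> F" "chord n x (x + t) = s"
    using IVT'[of "\<lambda>t. chord n x (x + t)" 0 s F] F s by auto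
  have "t \<noteq> 0" "t \<noteq> F" using t F s by auto
  moreover have "\<not> t < hit_time n s x"
    using hit_time_first_hit(4)[OF n s(1), where t = t and x = x] t \<open>t \<noteq> 0\<close> s r by auto
  ultimately show ?thesis using t unfolding F_def by simp
qed

lemma tendsto_hit_time_r_crit:
  assumes n: "3 \<le> n" and rc: "0 < r_crit n"
  shows "((\<lambda>s. hit_time n s x) \<longlongrightarrow> hit_time n (r_crit n) x) (at_left (r_crit n))"
proof (rule tendstoI)
  fix e :: real assume e: "0 < e"
  define F where "F = hit_time n (r_crit n) x"
  have F: "0 < F" using hit_time_first_hit(1)[OF n rc order_refl] unfolding F_def .
  define t1 where "t1 = max 0 (F - e)"
  have t1: "0 \<le> t1" "t1 < F" using F e unfolding t1_def by auto
  have "continuous_on {0..t1} (\<lambda>t. chord n x (x + t))"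
    using n by (intro continuous_on_chord continuous_intros) auto
  then obtain tm where tm: "0 \<le> tm" "tm \<le> t1"
    and tmax: "\<And>y. 0 \<le> y \<Longrightarrow> y \<le> t1 \<Longrightarrow> chord n x (x + y) \<le> chord n x (x + tm)"
    using continuous_attains_sup[of "{0..t1}" "\<lambda>t. chord n x (x + t)"] t1 by auto
  define M where "M = chord n x (x + tm)"
  have "tm < hit_time n (r_crit n) x" using tm t1 unfolding F_def by simp
  have "chord n x (x + tm) < r_crit n"
  proof (cases "tm = 0")
    case True
    then show ?thesis using rc by simp
  next
    case False
    then show ?thesis
      using hit_time_first_hit(4)[OF n rc order_refl, where t = tm and x = x] tm \<open>tm < _\<close> by simp
  qed
  then have M: "0 \<le> M" "M < r_crit n" unfolding M_def by simp_all
  show "eventually (\<lambda>s. dist (hit_time n s x) F < e) (at_left (r_crit n))"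
    using eventually_at_left_real[OF M(2)]
  proof (rule eventually_mono)
    fix s assume s: "s \<in> {M<..<r_crit n}"
    then have s0: "0 < s" using M by simp
    note hs = hit_time_first_hit(1,3)[OF n s0, where x = x]
    have "t1 < hit_time n s x"
      using tmax[of "hit_time n s x"] hs s unfolding M_def by force
    moreover have "hit_time n s x < F"
      using hit_time_strict_mono[OF n s0 _ order_refl] s unfolding F_def by simp
    ultimately show "dist (hit_time n s x) F < e"
      unfolding t1_def dist_real_def by auto
  qed
qed

lemma g_full_eq:
  assumes n: "3 \<le> n" and p: "p \<in> polygon n" and r: "0 < r" "r \<le> r_crit n"
  shows "g_full n r p = pparam n (ppos n p + hit_time n r (ppos n p))"
proof -
  have g_map: "g_map n s p = pparam n (ppos n p + hit_time n s (ppos n p))" for s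
    unfolding g_map_def hit_time_def pparam_ppos(1)[OF n p] ..
  show ?thesis
  proof (cases "r < r_crit n")
    case True
    then show ?thesis unfolding g_full_def g_map by simp
  next
    case False
    define a where "a = ppos n p"
    have "((\<lambda>s. pparam n (a + hit_time n s a)) \<longlongrightarrow> pparam n (a + hit_time n (r_crit n) a))
        (at_left (r_crit n))"
      using n r False
      by (intro isCont_tendsto_compose[OF isCont_pparam] tendsto_intros tendsto_hit_time_r_crit) auto
    then show ?thesis
      unfolding g_full_def g_map using False r a_def by (simp add: tendsto_Lim)
  qed
qed

lemma hit_time_add_of_int: "n > 0 \<Longrightarrow> hit_time n r (y + of_int k) = hit_time n r y"
  unfolding hit_time_def using pparam_add_of_int[of n "y + _" k]
  by (simp add: pparam_add_of_int algebra_simps)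

lemma hit_time_frac: "n > 0 \<Longrightarrow> hit_time n r (frac y) = hit_time n r y"
  using hit_time_add_of_int[of n r "frac y" "\<lfloor>y\<rfloor>"] by (simp add: frac_def)

text \<open>Reflection through a vertex or an edge midpoint maps the polygon onto itself and
  reverses orientation, so it turns the first hit after x into the first hit before it.\<close>
lemma hit_time_reflect:
  assumes n: "3 \<le> n" and r: "0 < r" "r \<le> r_crit n" and c: "real n * c \<in> \<int>"
  shows "hit_time n r (c - x - hit_time n r x) = hit_time n r x"
proof -
  have n0: "n > 0" using n by simp
  define F where "F = hit_time n r x"
  define b where "b = c - x - F"
  note F = hit_time_first_hit(1-3)[OF n r, where x = x, folded F_def]
  have chord_b: "chord n b (b + t) = chord n (x + F - t) (x + F)" for t
    using chord_reflect[OF n0 c, of "x + F" "x + F - t"] unfolding b_def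
    by (simp add: chord_commute algebra_simps)
  have "Inf {t. 0 < t \<and> t < 1 \<and> chord n b (b + t) = r} = F"
  proof (rule cInf_eq_minimum)
    show "F \<in> {t. 0 < t \<and> t < 1 \<and> chord n b (b + t) = r}"
      using F unfolding chord_b by (simp add: chord_commute)
  next
    fix t assume "t \<in> {t. 0 < t \<and> t < 1 \<and> chord n b (b + t) = r}"
    then have t: "0 < t" "chord n (x + F - t) (x + F) = r" unfolding chord_b by auto
    show "F \<le> t"
    proof (rule ccontr)
      assume "\<not> F \<le> t"
      then have "chord n (x + (F - t)) (x + F) < r"
        using chord_to_hit_time_less[OF n r, of "F - t" x, folded F_def] t(1) by simp
      then show False using t(2) by (simp add: algebra_simps)
    qed
  qed
  then show ?thesis unfolding hit_time_def chord_def b_def F_def .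
qed

definition next_pos :: "nat \<Rightarrow> real \<Rightarrow> real \<Rightarrow> real" where
  "next_pos n r y = frac (y + hit_time n r y)"

lemma ppos_g_full:
  assumes n: "3 \<le> n" and p: "p \<in> polygon n" and r: "0 < r" "r \<le> r_crit n"
  shows "ppos n (g_full n r p) = next_pos n r (ppos n p)"
  unfolding g_full_eq[OF assms] ppos_pparam[OF n] next_pos_def ..

lemma next_pos_reflect:
  assumes n: "3 \<le> n" and r: "0 < r" "r \<le> r_crit n" and c: "real n * c \<in> \<int>"
  shows "next_pos n r (frac (c - next_pos n r y)) = frac (c - y)"
proof -
  have n0: "n > 0" using n by simp
  define b where "b = c - y - hit_time n r y"
  have "frac (c - next_pos n r y) = frac b"
    unfolding next_pos_def b_def frac_diff_simp by (simp add: algebra_simps)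
  then have "next_pos n r (frac (c - next_pos n r y)) = frac (frac b + hit_time n r (frac b))"
    unfolding next_pos_def by simp
  also have "\<dots> = frac (b + hit_time n r b)" by (simp add: hit_time_frac[OF n0])
  also have "b + hit_time n r b = c - y"
    unfolding b_def hit_time_reflect[OF n r c] by simp
  finally show ?thesis .
qed

lemma next_pos_inj:
  assumes n: "3 \<le> n" and r: "0 < r" "r \<le> r_crit n"
    and y: "0 \<le> y" "y < 1" and y': "0 \<le> y'" "y' < 1" and eq: "next_pos n r y = next_pos n r y'"
  shows "y = y'"
proof -
  have "frac (0 - y) = frac (0 - y')"
    using next_pos_reflect[OF n r, of 0 y] next_pos_reflect[OF n r, of 0 y'] eq by simp
  then show ?thesis using y y' by (simp add: frac_neg_eq_iff frac_eq)
qed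

section \<open>Orbits of the first-hit map\<close>

lemma orbit_reflect:
  fixes X :: "int \<Rightarrow> real"
  assumes n: "3 \<le> n" and r: "0 < r" "r \<le> r_crit n"
    and orbit: "\<And>k. X (k + 1) = next_pos n r (X k)" and range: "\<And>k. 0 \<le> X k \<and> X k < 1"
    and c: "real n * (2 * X i) \<in> \<int>"
  shows "X (i - k) = frac (2 * X i - X (i + k))"
proof -
  have nat_case: "X (i - int j) = frac (2 * X i - X (i + int j))" for j
  proof (induction j)
    case 0
    then show ?case using range[of i] by (simp add: frac_eq)
  next
    case (Suc j)
    have "next_pos n r (frac (2 * X i - X (i + int j + 1))) = frac (2 * X i - X (i + int j))"
      unfolding orbit by (rule next_pos_reflect[OF n r c])
    also have "\<dots> = next_pos n r (X (i - int j - 1))"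
      using Suc orbit[of "i - int j - 1"] by simp
    finally have "frac (2 * X i - X (i + int j + 1)) = X (i - int j - 1)"
      using next_pos_inj[OF n r] range[of "i - int j - 1"] by (simp add: frac_lt_1)
    then show ?case by (simp add: algebra_simps)
  qed
  show ?thesis
  proof (cases "0 \<le> k")
    case True
    then show ?thesis using nat_case[of "nat k"] by simp
  next
    case False
    then have "X (i + k) = frac (2 * X i - X (i - k))" using nat_case[of "nat (- k)"] by simp
    then have "frac (2 * X i - X (i + k)) = frac (X (i - k))" by (simp add: frac_diff_simp)
    then show ?thesis using range[of "i - k"] by (simp add: frac_eq)
  qed
qed

lemma orbit_two_reflections:
  fixes X :: "int \<Rightarrow> real"
  assumes n: "3 \<le> n" and r: "0 < r" "r \<le> r_crit n"
    and orbit: "\<And>k. X (k + 1) = next_pos n r (X k)" and range: "\<And>k. 0 \<le> X k \<and> X k < 1"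
    and ci: "real n * (2 * X i) \<in> \<int>" and cj: "real n * (2 * X j) \<in> \<int>"
  shows "X (i + 2 * (j - i) * int s) = frac (X i + real s * (2 * X j - 2 * X i))"
proof (induction s)
  case 0
  then show ?case using range[of i] by (simp add: frac_eq)
next
  case (Suc s)
  have step: "X (k + 2 * (j - i)) = frac (X k + (2 * X j - 2 * X i))" for k
  proof -
    have "X (k + 2 * (j - i)) = frac (2 * X j - X (i - (k - i)))"
      using orbit_reflect[OF n r orbit range cj, of "2 * i - k - j"] by (simp add: algebra_simps)
    also have "X (i - (k - i)) = frac (2 * X i - X k)"
      using orbit_reflect[OF n r orbit range ci, of "k - i"] by simp
    finally show ?thesis by (simp add: frac_diff_simp algebra_simps)
  qed
  have "X (i + 2 * (j - i) * int (Suc s)) = X (i + 2 * (j - i) * int s + 2 * (j - i))"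
    by (simp add: algebra_simps)
  also have "\<dots> = frac (frac (X i + real s * (2 * X j - 2 * X i)) + (2 * X j - 2 * X i))"
    unfolding step Suc ..
  also have "\<dots> = frac (X i + real (Suc s) * (2 * X j - 2 * X i))"
    unfolding frac_add_simps by (simp add: algebra_simps)
  finally show ?case .
qed

lemma odd_orbit_not_vertex_and_midpoint:
  fixes X :: "int \<Rightarrow> real"
  assumes n: "3 \<le> n" and r: "0 < r" "r \<le> r_crit n"
    and orbit: "\<And>k. X (k + 1) = next_pos n r (X k)" and range: "\<And>k. 0 \<le> X k \<and> X k < 1"
    and period: "\<And>k m. X (k + int (2 * l + 1) * m) = X k"
    and vertex: "real n * X i \<in> \<int>" and midpoint: "real n * X j - 1/2 \<in> \<int>"
  shows False
proof -
  have "2 * (real n * X i) \<in> \<int>" by (rule Ints_mult[OF Ints_numeral vertex])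
  then have ci: "real n * (2 * X i) \<in> \<int>" by (simp add: mult.left_commute)
  have "2 * (real n * X j - 1/2) + 1 \<in> \<int>" using midpoint by (intro Ints_add Ints_mult) simp_all
  then have cj: "real n * (2 * X j) \<in> \<int>" by (simp add: algebra_simps)
  define y where "y = X i + real (l + 1) * (2 * X j - 2 * X i)"
  have "X j = X (i + 2 * (j - i) * int (l + 1))"
    using period[of j "j - i"] by (simp add: algebra_simps)
  also have "\<dots> = frac y"
    unfolding y_def by (rule orbit_two_reflections[OF n r orbit range ci cj])
  finally have "X j = y - of_int \<lfloor>y\<rfloor>" unfolding frac_def .
  then have "real n * X j = real n * y - real n * of_int \<lfloor>y\<rfloor>"
    by (simp add: right_diff_distrib)
  moreover have "real n * y \<in> \<int>"
    using vertex ci cj unfolding y_def by (simp add: algebra_simps Ints_add Ints_diff Ints_mult)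
  ultimately have "real n * X j \<in> \<int>" by simp
  then have "real n * X j - (real n * X j - 1/2) \<in> \<int>" using midpoint by (rule Ints_diff)
  then show False using frac_eq_0_iff[of "1/2 :: real"] by (simp add: frac_eq)
qed

lemma of_nat_mult_frac_divide:
  assumes "n > 0" shows "real n * frac (a / real n) = a - of_int (int n * \<lfloor>a / real n\<rfloor>)"
  using assms unfolding frac_def by (simp add: right_diff_distrib)

lemma ppos_vertex:
  assumes n: "3 \<le> n" and "is_vertex n p" shows "real n * ppos n p \<in> \<int>"
proof -
  obtain k where "p = pvert n k" using assms(2) unfolding is_vertex_def by blast
  then have "real n * ppos n p = of_int k - of_int (int n * \<lfloor>of_int k / real n\<rfloor>)"
    using n of_nat_mult_frac_divide[of n "of_int k"] by (simp add: pvert_eq_pparam ppos_pparam)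
  then show ?thesis by simp
qed

lemma ppos_edge_midpoint:
  assumes n: "3 \<le> n" and "is_edge_midpoint n p" shows "real n * ppos n p - 1/2 \<in> \<int>"
proof -
  obtain k where "p = (pvert n k + pvert n (k + 1)) / 2"
    using assms(2) unfolding is_edge_midpoint_def by blast
  then have "real n * ppos n p = of_int k + 1/2 - of_int (int n * \<lfloor>(of_int k + 1/2) / real n\<rfloor>)"
    using n of_nat_mult_frac_divide[of n "of_int k + 1/2"]
    by (simp add: edge_midpoint_eq_pparam ppos_pparam)
  then show ?thesis by simp
qed

lemma star_orbit:
  assumes n: "3 \<le> n" and star: "is_star n l r u"
  defines "X \<equiv> \<lambda>k::int. ppos n (u (nat (k mod int (2 * l + 1))))"
  shows "X (k + 1) = next_pos n r (X k)" "0 \<le> X k \<and> X k < 1" "X (k + int (2 * l + 1) * m) = X k"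
proof -
  define N where "N = 2 * l + 1"
  have r: "0 < r" "r \<le> r_crit n"
    and step: "\<And>i. i < N \<Longrightarrow> u i \<in> polygon n \<and> u ((i + 1) mod N) = g_full n r (u i)"
    using star unfolding is_star_def N_def by auto
  define i where "i = nat (k mod int N)"
  have i: "i < N" "int i = k mod int N" unfolding i_def N_def by (simp_all add: nat_less_iff)
  then have "nat ((k + 1) mod int N) = (i + 1) mod N"
    by (metis mod_add_left_eq nat_int of_nat_1 of_nat_add of_nat_mod)
  then have "X (k + 1) = ppos n (g_full n r (u i))"
    using step[OF i(1)] unfolding X_def N_def by simp
  also have "\<dots> = next_pos n r (X k)"
    using ppos_g_full[OF n _ r] step[OF i(1)] unfolding X_def i_def N_def by simp
  finally show "X (k + 1) = next_pos n r (X k)" .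
  show "0 \<le> X k \<and> X k < 1"
    using pparam_ppos(2,3)[OF n] step[OF i(1)] unfolding X_def i_def N_def by simp
  show "X (k + int (2 * l + 1) * m) = X k" unfolding X_def by simp
qed

theorem lemma5p8:
  fixes l n :: nat and r :: real and u :: "nat \<Rightarrow> complex"
  assumes "l \<ge> 1" and "n \<ge> 4 * l + 2"
    and "is_star n l r u"
  shows "\<not> ((\<exists>i < 2*l+1. is_vertex n (u i)) \<and> (\<exists>j < 2*l+1. is_edge_midpoint n (u j)))"
proof
  assume "(\<exists>i < 2*l+1. is_vertex n (u i)) \<and> (\<exists>j < 2*l+1. is_edge_midpoint n (u j))"
  then obtain i j where i: "i < 2*l+1" "is_vertex n (u i)" and j: "j < 2*l+1" "is_edge_midpoint n (u j)"
    by blast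
  have n: "3 \<le> n" using assms(1,2) by simp
  have r: "0 < r" "r \<le> r_crit n" using assms(3) unfolding is_star_def by auto
  define X where "X = (\<lambda>k::int. ppos n (u (nat (k mod int (2 * l + 1)))))"
  have orbit: "\<And>k. X (k + 1) = next_pos n r (X k)" "\<And>k. 0 \<le> X k \<and> X k < 1"
    "\<And>k m. X (k + int (2 * l + 1) * m) = X k"
    unfolding X_def by (rule star_orbit[OF n assms(3)])+
  have "X (int i) = ppos n (u i)" "X (int j) = ppos n (u j)" using i(1) j(1) unfolding X_def by simp_all
  then have "real n * X (int i) \<in> \<int>" "real n * X (int j) - 1/2 \<in> \<int>"
    using ppos_vertex[OF n i(2)] ppos_edge_midpoint[OF n j(2)] by simp_all
  then show False by (rule odd_orbit_not_vertex_and_midpoint[OF n r orbit])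
qed

end
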